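(* Let $w=(i,\epsilon)\in\mathcal W_0(d)$ and $i_0=\min\{i(l): l\in[d]\}$. Then for every block $\{l,m\}$ of the pair partition $\pi(w)$ we have $i(l)=i_0$ if and only if $i(m)=i_0$.
   Context: Fix an integer $p\ge2$; $F_p=\langle x_0,x_1,\dots\mid x_nx_k=x_kx_{n+p-1}\ \forall k<n\rangle$ with identity $e$. For $d\in\mathbb N$ and $[d]=\{1,\dots,d\}$, a word of length $d$ is a tuple $w=(x_{i(1)}^{\epsilon(1)},\dots,x_{i(d)}^{\epsilon(d)})$ with $i:[d]\to\mathbb N_0$, $\epsilon:[d]\to\{1,-1\}$, written $w=(i,\epsilon)$; $\mathrm{eval}(w)=x_{i(1)}^{\epsilon(1)}\cdots x_{i(d)}^{\epsilon(d)}$; $\mathcal W(d)$ is the set of words of length $d$ and $\mathcal W_0(d)=\{w\in\mathcal W(d):\mathrm{eval}(w)=e\}$. Rewriting relations: ($\rightsquigarrow$) a consecutive pair $(x_a^{-1},x_b)$ is replaced by $(x_b,x_{a+p-1}^{-1})$ if $a>b$, by $(x_{b+p-1},x_a^{-1})$ if $a<b$, by $(x_b,x_a^{-1})$ if $a=b$; ($\rightarrowtail$, on $\rightsquigarrow$-irreducible words) $(x_a,x_b)$ with $b-p+1>a$ is replaced by $(x_{b-p+1},x_a)$, and $(x_a^{-1},x_b^{-1})$ with $a-p+1>b$ by $(x_b^{-1},x_{a-p+1}^{-1})$. The normal form $\mathrm{NF}(w)$ is obtained by applying $\rightsquigarrow$ until irreducible and then $\rightarrowtail$ until irreducible (well defined).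 Each step swaps two adjacent letters; $\tau(w)\in S_d$ is defined by letting $\tau(w)(l)$ be the position in $\mathrm{NF}(w)$ of the letter originating from the $l$-th letter of $w$. For $w\in\mathcal W_0(d)$ ($d$ even), $\pi(w)$ is the pair partition of $[d]$ whose blocks are the pairs $\{l,m\}$ with $\tau(w)(l)+\tau(w)(m)=d+1$ (the image under $\tau(w)^{-1}$ of the rainbow partition $\{\{1,d\},\{2,d-1\},\dots,\{d/2,d/2+1\}\}$). *)

theory Defs
  imports Main
begin

text \<open>A letter x_a^e of the alphabet of F_p is a pair (a, e) with e in {1,-1}.
  A word is a list of letters.\<close>
type_synonym letter = "nat \<times> int"

inductive fp_move :: "nat \<Rightarrow> letter list \<Rightarrow> letter list \<Rightarrow> bool" for p :: nat where
  cancel_pos: "fp_move p (u @ [(a, 1), (a, -1)] @ v) (u @ v)"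
| cancel_neg: "fp_move p (u @ [(a, -1), (a, 1)] @ v) (u @ v)"
| rel: "k < n \<Longrightarrow> fp_move p (u @ [(n, 1), (k, 1)] @ v) (u @ [(k, 1), (n + p - 1, 1)] @ v)"

definition eval_is_identity :: "nat \<Rightarrow> letter list \<Rightarrow> bool" where
  "eval_is_identity p w \<longleftrightarrow> equivclp (fp_move p) w []"

definition word_of :: "(nat \<Rightarrow> nat) \<Rightarrow> (nat \<Rightarrow> int) \<Rightarrow> nat \<Rightarrow> letter list" where
  "word_of i eps d = map (\<lambda>l. (i l, eps l)) [1..<Suc d]"

text \<open>Labelled letters (origin position, index, exponent), to track letters through rewriting.\<close>
type_synonym lletter = "nat \<times> nat \<times> int"

definition labelled_word_of :: "(nat \<Rightarrow> nat) \<Rightarrow> (nat \<Rightarrow> int) \<Rightarrow> nat \<Rightarrow> lletter list" where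
  "labelled_word_of i eps d = map (\<lambda>l. (l, i l, eps l)) [1..<Suc d]"

inductive sq_step :: "nat \<Rightarrow> lletter list \<Rightarrow> lletter list \<Rightarrow> bool" for p :: nat where
  gt: "a > b \<Longrightarrow> sq_step p (u @ [(l, a, -1), (m, b, 1)] @ v) (u @ [(m, b, 1), (l, a + p - 1, -1)] @ v)"
| lt: "a < b \<Longrightarrow> sq_step p (u @ [(l, a, -1), (m, b, 1)] @ v) (u @ [(m, b + p - 1, 1), (l, a, -1)] @ v)"
| eq: "a = b \<Longrightarrow> sq_step p (u @ [(l, a, -1), (m, b, 1)] @ v) (u @ [(m, b, 1), (l, a, -1)] @ v)"

text \<open>The second rewriting relation (tailed arrow), on squiggly-irreducible words.
  The condition b - p + 1 > a is written a + p < b + 1 (no natural-number truncation).\<close>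
inductive tl_step :: "nat \<Rightarrow> lletter list \<Rightarrow> lletter list \<Rightarrow> bool" for p :: nat where
  pos: "\<lbrakk>\<not> (\<exists>z. sq_step p (u @ [(l, a, 1), (m, b, 1)] @ v) z); a + p < b + 1\<rbrakk>
        \<Longrightarrow> tl_step p (u @ [(l, a, 1), (m, b, 1)] @ v) (u @ [(m, b + 1 - p, 1), (l, a, 1)] @ v)"
| neg: "\<lbrakk>\<not> (\<exists>z. sq_step p (u @ [(l, a, -1), (m, b, -1)] @ v) z); b + p < a + 1\<rbrakk>
        \<Longrightarrow> tl_step p (u @ [(l, a, -1), (m, b, -1)] @ v) (u @ [(m, b, -1), (l, a + 1 - p, -1)] @ v)"

definition labelled_NF :: "nat \<Rightarrow> lletter list \<Rightarrow> lletter list \<Rightarrow> bool" where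
  "labelled_NF p ws0 ws \<longleftrightarrow>
     (\<exists>ws1. (sq_step p)\<^sup>*\<^sup>* ws0 ws1 \<and> \<not> (\<exists>z. sq_step p ws1 z)
        \<and> (tl_step p)\<^sup>*\<^sup>* ws1 ws \<and> \<not> (\<exists>z. tl_step p ws z))"

definition tau :: "lletter list \<Rightarrow> nat \<Rightarrow> nat" where
  "tau ws l = Suc (THE k. k < length ws \<and> fst (ws ! k) = l)"

definition pi_part :: "nat \<Rightarrow> (nat \<Rightarrow> nat) \<Rightarrow> nat set set" where
  "pi_part d t = {{l, m} | l m. l \<in> {1..d} \<and> m \<in> {1..d} \<and> t l + t m = d + 1}"

end

theory Submission
  imports Defs "HOL-Library.Multiset"
begin

text \<open>F_p acts on sequences of streams: the generator x_n interleaves the p streams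
  n, \<dots>, n + p - 1 into a single stream and shifts the later streams down, and the defining
  relations as well as both kinds of rewriting moves preserve this action.
  A \<rightsquigarrow>-irreducible word has all its positive letters in front of its negative ones,
  and \<rightarrowtail>-irreducibility makes the index sequence P of the positive part and the reversed
  index sequence of the negative part "normal". Distinct normal sequences act differently
  on the sequence of streams \<open>Pair\<close>, so for a word representing e the two coincide: the index
  sequence of NF(w) is a palindrome, and the blocks of \<pi>(w) pair mirror positions of NF(w).
  Finally, a letter lies at the minimal index i0 in NF(w) if and only if it did in w.\<close>

section \<open>An action of F_p on sequences of streams\<close>

definition interleave :: "nat \<Rightarrow> nat \<Rightarrow> (nat \<Rightarrow> nat \<Rightarrow> 'a) \<Rightarrow> nat \<Rightarrow> nat \<Rightarrow> 'a" where
  "interleave p n F = (\<lambda>j. if j < n then F j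
     else if j = n then (\<lambda>m. F (n + m mod p) (m div p)) else F (j + p - 1))"

definition deinterleave :: "nat \<Rightarrow> nat \<Rightarrow> (nat \<Rightarrow> nat \<Rightarrow> 'a) \<Rightarrow> nat \<Rightarrow> nat \<Rightarrow> 'a" where
  "deinterleave p n F = (\<lambda>j. if j < n then F j
     else if j < n + p then (\<lambda>m. F n (m * p + (j - n))) else F (j + 1 - p))"

lemma interleave_deinterleave: "p \<ge> 1 \<Longrightarrow> interleave p n (deinterleave p n F) = F"
  unfolding interleave_def deinterleave_def
  by (auto simp: fun_eq_iff add.commute[of "_ * p"] mult.commute)

lemma deinterleave_interleave:
  assumes "p \<ge> 1"
  shows "deinterleave p n (interleave p n F) = F"
proof (intro ext)
  fix j m
  consider "j < n" | "n \<le> j" "j < n + p" | "n + p \<le> j" by linarith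
  then show "deinterleave p n (interleave p n F) j m = F j m"
  proof cases
    case 2
    then obtain r where "j = n + r" "r < p" using le_Suc_ex by force
    then show ?thesis by (simp add: interleave_def deinterleave_def)
  qed (use assms in \<open>auto simp: interleave_def deinterleave_def\<close>)
qed

lemma interleave_commute:
  assumes "p \<ge> 1" "k < n"
  shows "interleave p n (interleave p k F) = interleave p k (interleave p (n + p - 1) F)"
proof -
  have "k + m mod p < n + p - 1" for m using assms mod_less_divisor[of p m] by linarith
  then show ?thesis using assms unfolding interleave_def
    by (auto simp: fun_eq_iff algebra_simps)
qed

lemma deinterleave_interleave_gt:
  "p \<ge> 1 \<Longrightarrow> b < a \<Longrightarrow>
    deinterleave p a (interleave p b F) = interleave p b (deinterleave p (a + p - 1) F)"
  by (metis interleave_commute interleave_deinterleave deinterleave_interleave)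

lemma deinterleave_interleave_lt:
  "p \<ge> 1 \<Longrightarrow> a < b \<Longrightarrow>
    deinterleave p a (interleave p b F) = interleave p (b + p - 1) (deinterleave p a F)"
  by (metis interleave_commute interleave_deinterleave deinterleave_interleave)

lemma interleave_interleave_far:
  assumes "p \<ge> 1" "a + p < b + 1"
  shows "interleave p a (interleave p b F) = interleave p (b + 1 - p) (interleave p a F)"
  using interleave_commute[OF assms(1), of a "b + 1 - p" F] assms by simp

lemma deinterleave_deinterleave_far:
  assumes "p \<ge> 1" "b + p < a + 1"
  shows "deinterleave p a (deinterleave p b F) = deinterleave p b (deinterleave p (a + 1 - p) F)"
proof -
  define G where "G = deinterleave p b (deinterleave p (a + 1 - p) F)"
  have "interleave p b (interleave p a G) = interleave p (a + 1 - p) (interleave p b G)"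
    using interleave_commute[OF assms(1), of b "a + 1 - p" G] assms by simp
  also have "\<dots> = F" using assms(1) by (simp add: G_def interleave_deinterleave)
  finally have "deinterleave p a (deinterleave p b F) = G"
    using assms(1) by (metis deinterleave_interleave)
  then show ?thesis unfolding G_def .
qed

definition letter_action :: "nat \<Rightarrow> letter \<Rightarrow> (nat \<Rightarrow> nat \<Rightarrow> 'a) \<Rightarrow> nat \<Rightarrow> nat \<Rightarrow> 'a" where
  "letter_action p x = (if snd x = 1 then interleave p (fst x) else deinterleave p (fst x))"

definition word_action :: "nat \<Rightarrow> letter list \<Rightarrow> (nat \<Rightarrow> nat \<Rightarrow> 'a) \<Rightarrow> nat \<Rightarrow> nat \<Rightarrow> 'a" where
  "word_action p w = foldr (letter_action p) w"

lemma word_action_simps [simp]: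
  "word_action p [] F = F"
  "word_action p (x # w) F = letter_action p x (word_action p w F)"
  "word_action p (u @ v) F = word_action p u (word_action p v F)"
  by (simp_all add: word_action_def)

lemma letter_action_simps [simp]:
  "letter_action p (a, 1) = interleave p a"
  "letter_action p (a, -1) = deinterleave p a"
  by (simp_all add: letter_action_def)

lemma equivclp_invariant:
  assumes "\<And>x y. R x y \<Longrightarrow> f x = f y" and "equivclp R x y"
  shows "f x = f y"
  using assms(2) by (induction rule: equivclp_induct) (auto dest: assms(1))

lemma rtranclp_invariant:
  "(\<And>x y. R x y \<Longrightarrow> f x = f y) \<Longrightarrow> R\<^sup>*\<^sup>* x y \<Longrightarrow> f x = f y"
  using equivclp_invariant[of R f] rtranclp_into_equivclp by metis

lemma labelled_NF_invariant:
  assumes "\<And>x y. sq_step p x y \<Longrightarrow> f x = f y" and "\<And>x y. tl_step p x y \<Longrightarrow> f x = f y"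
    and "labelled_NF p xs ws"
  shows "f xs = f ws"
proof -
  obtain ws1 where sq: "(sq_step p)\<^sup>*\<^sup>* xs ws1" and tl: "(tl_step p)\<^sup>*\<^sup>* ws1 ws"
    using assms(3) unfolding labelled_NF_def by blast
  have "f xs = f ws1" by (rule rtranclp_invariant[where f = f, OF assms(1) sq])
  also have "\<dots> = f ws" by (rule rtranclp_invariant[where f = f, OF assms(2) tl])
  finally show ?thesis .
qed

lemma fp_move_word_action:
  "fp_move p w w' \<Longrightarrow> p \<ge> 1 \<Longrightarrow> word_action p w F = word_action p w' F"
  by (induction rule: fp_move.induct)
    (simp_all add: interleave_deinterleave deinterleave_interleave interleave_commute)

lemma eval_is_identity_word_action:
  assumes "eval_is_identity p w" and "p \<ge> 1"
  shows "word_action p w F = F"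
  using equivclp_invariant[of "fp_move p" "\<lambda>w. word_action p w F", OF fp_move_word_action]
    assms unfolding eval_is_identity_def by simp

lemma sq_step_word_action:
  "sq_step p xs ys \<Longrightarrow> p \<ge> 1 \<Longrightarrow> word_action p (map snd xs) F = word_action p (map snd ys) F"
  by (induction rule: sq_step.induct)
    (simp_all add: deinterleave_interleave_gt deinterleave_interleave_lt
      interleave_deinterleave deinterleave_interleave)

lemma tl_step_word_action:
  "tl_step p xs ys \<Longrightarrow> p \<ge> 1 \<Longrightarrow> word_action p (map snd xs) F = word_action p (map snd ys) F"
  by (induction rule: tl_step.induct)
    (simp_all add: interleave_interleave_far deinterleave_deinterleave_far)

lemma labelled_NF_word_action:
  assumes "labelled_NF p xs ws" and "p \<ge> 1"
  shows "word_action p (map snd xs) F = word_action p (map snd ws) F"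
  by (rule labelled_NF_invariant[where f = "\<lambda>xs. word_action p (map snd xs) F",
        OF sq_step_word_action[OF _ assms(2)] tl_step_word_action[OF _ assms(2)] assms(1)])

section \<open>Normal sequences\<close>

abbreviation pos_word :: "nat list \<Rightarrow> letter list" where
  "pos_word xs \<equiv> map (\<lambda>a. (a, 1)) xs"

abbreviation neg_word :: "nat list \<Rightarrow> letter list" where
  "neg_word xs \<equiv> map (\<lambda>a. (a, -1)) xs"

lemma neg_word_rev_pos_word:
  "p \<ge> 1 \<Longrightarrow> word_action p (neg_word N) (word_action p (pos_word (rev N)) F) = F"
  by (induction N arbitrary: F) (simp_all add: deinterleave_interleave)

text \<open>Index sequences of the positive words to which no \<rightarrowtail>-move applies.\<close>

fun normal_seq :: "nat \<Rightarrow> nat list \<Rightarrow> bool" where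
  "normal_seq p (a # b # r) \<longleftrightarrow> b < a + p \<and> normal_seq p (b # r)"
| "normal_seq p _ \<longleftrightarrow> True"

lemma normal_seq_Cons_tail: "normal_seq p (a # r) \<Longrightarrow> normal_seq p r"
  by (cases r) auto

lemma normal_seqI:
  "(\<And>u a b v. xs = u @ [a, b] @ v \<Longrightarrow> b < a + p) \<Longrightarrow> normal_seq p xs"
proof (induction p xs rule: normal_seq.induct)
  case (1 p a b r)
  have "normal_seq p (b # r)"
    by (rule "1.IH") (use "1.prems" in \<open>metis append_Cons\<close>)
  moreover have "b < a + p" using "1.prems"[of "[]"] by simp
  ultimately show ?case by simp
qed simp_all

lemma word_action_normal_seq_beyond:
  assumes "p \<ge> 1" "normal_seq p P" "P = [] \<or> hd P < j"
  shows "word_action p (pos_word P) Pair j = Pair (j + (p - 1) * length P)"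
  using assms(2,3)
proof (induction P arbitrary: j)
  case (Cons a r)
  have "r = [] \<or> hd r < j + p - 1"
    using Cons.prems by (cases r) auto
  then have "word_action p (pos_word r) Pair (j + p - 1) = Pair (j + p - 1 + (p - 1) * length r)"
    using Cons.IH normal_seq_Cons_tail[OF Cons.prems(1)] by blast
  moreover have "j + p - 1 + (p - 1) * length r = j + (p - 1) * length (a # r)"
    using assms(1) by simp
  moreover have "word_action p (pos_word (a # r)) Pair j = word_action p (pos_word r) Pair (j + p - 1)"
    using Cons.prems(2) by (simp add: interleave_def)
  ultimately show ?case by (simp add: add.assoc)
qed simp

lemma word_action_pos_word_zero: "snd (word_action p (pos_word P) Pair j 0) = 0"
  by (induction P arbitrary: j) (simp_all add: interleave_def)

lemma word_action_pos_word_not_Pair: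
  assumes "p \<ge> 2"
  shows "word_action p (pos_word (a # r)) Pair a \<noteq> Pair c"
proof
  assume eq: "word_action p (pos_word (a # r)) Pair a = Pair c"
  have "snd (word_action p (pos_word (a # r)) Pair a 1) = snd (word_action p (pos_word r) Pair (a + 1) 0)"
    using assms by (simp add: interleave_def)
  also have "\<dots> = 0" by (rule word_action_pos_word_zero)
  finally show False using eq by simp
qed

lemma interleave_eq_iff: "p \<ge> 1 \<Longrightarrow> interleave p a F = interleave p a G \<longleftrightarrow> F = G"
  by (metis deinterleave_interleave)

text \<open>The first letter a of P is recovered from its action on \<open>Pair\<close> as the first stream
  that is not of the form \<open>Pair c\<close>: the streams below a are untouched, the streams beyond a
  normal sequence are merely shifted, and stream a is a genuine interleaving.\<close>

lemma normal_seq_unique: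
  assumes "p \<ge> 2"
  shows "normal_seq p P \<Longrightarrow> normal_seq p Q \<Longrightarrow>
    word_action p (pos_word P) Pair = word_action p (pos_word Q) Pair \<Longrightarrow> P = Q"
proof (induction P arbitrary: Q)
  case Nil
  show ?case
  proof (cases Q)
    case (Cons b r')
    then have "word_action p (pos_word (b # r')) Pair b = Pair b" using Nil.prems(3)[symmetric] by simp
    with word_action_pos_word_not_Pair[OF assms, of b r' b] show ?thesis by contradiction
  qed simp
next
  case (Cons a r)
  obtain b r' where Q: "Q = b # r'"
  proof (cases Q)
    case Nil
    then have "word_action p (pos_word (a # r)) Pair a = Pair a" using Cons.prems(3) by simp
    with word_action_pos_word_not_Pair[OF assms, of a r a] show ?thesis by contradiction
  qed
  have "a = b"
  proof (rule ccontr)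
    assume "a \<noteq> b"
    then consider "a < b" | "b < a" by linarith
    then show False
    proof cases
      case 1
      then have "word_action p (pos_word (b # r')) Pair b = Pair (b + (p - 1) * length (a # r))"
        using word_action_normal_seq_beyond[of p "a # r" b] Cons.prems Q assms by simp
      with word_action_pos_word_not_Pair[OF assms] show False by contradiction
    next
      case 2
      then have "word_action p (pos_word (a # r)) Pair a = Pair (a + (p - 1) * length (b # r'))"
        using word_action_normal_seq_beyond[of p "b # r'" a] Cons.prems Q assms by simp
      with word_action_pos_word_not_Pair[OF assms] show False by contradiction
    qed
  qed
  with Cons.prems(3) Q have "interleave p a (word_action p (pos_word r) Pair) =
      interleave p a (word_action p (pos_word r') Pair)"
    by simp
  then have "word_action p (pos_word r) Pair = word_action p (pos_word r') Pair"
    using assms by (simp add: interleave_eq_iff)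
  then show ?case
    using Cons.IH normal_seq_Cons_tail Cons.prems(1,2) Q \<open>a = b\<close> by blast
qed

section \<open>The shape of normal forms\<close>

lemma sq_step_Cons: "sq_step p r z \<Longrightarrow> sq_step p (x # r) (x # z)"
proof (induction rule: sq_step.induct)
  case (gt a b u l m v)
  show ?case using sq_step.gt[OF gt, of p "x # u"] by simp
next
  case (lt a b u l m v)
  show ?case using sq_step.lt[OF lt, of p "x # u"] by simp
next
  case (eq a b u l m v)
  show ?case using sq_step.eq[OF eq, of p "x # u"] by simp
qed

lemma sq_step_applicable: "\<exists>z. sq_step p (u @ [(l, a, -1), (m, b, 1)] @ v) z"
  by (cases a b rule: linorder_cases) (blast intro: sq_step.intros)+

lemma sq_step_redex: "sq_step p xs ys \<Longrightarrow> \<exists>u l a m b v. xs = u @ [(l, a, -1), (m, b, 1)] @ v"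
  by (induction rule: sq_step.induct) blast+

lemma sq_irreducible_sign_split:
  assumes "\<forall>x\<in>set ws. snd (snd x) \<in> {1, -1}" and "\<not> (\<exists>z. sq_step p ws z)"
  shows "\<exists>P N. ws = P @ N \<and> (\<forall>x\<in>set P. snd (snd x) = 1) \<and> (\<forall>x\<in>set N. snd (snd x) = -1)"
  using assms
proof (induction ws)
  case (Cons x r)
  note signs = Cons.prems(1) and irreducible = Cons.prems(2)
  from Cons.IH obtain P N where r: "r = P @ N"
    and P: "\<forall>x\<in>set P. snd (snd x) = 1" and N: "\<forall>x\<in>set N. snd (snd x) = -1"
    using signs irreducible sq_step_Cons by (metis list.set_intros(2))
  show ?case
  proof (cases "snd (snd x) = 1")
    case True
    with r P N show ?thesis by (intro exI[of _ "x # P"] exI[of _ N]) simp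
  next
    case False
    with signs have x: "snd (snd x) = -1" by simp
    have "P = []"
    proof (rule ccontr)
      assume "P \<noteq> []"
      then obtain y P' where "P = y # P'" by (cases P) auto
      with r P x have "x # r = [] @ [(fst x, fst (snd x), -1), (fst y, fst (snd y), 1)] @ (P' @ N)"
        by (cases x, cases y) simp
      with irreducible sq_step_applicable show False by metis
    qed
    with r N x show ?thesis by (intro exI[of _ "[]"] exI[of _ "x # N"]) simp
  qed
qed simp

lemma sign_split_sq_irreducible:
  assumes "\<forall>x\<in>set P. snd (snd x) = 1" and "\<forall>x\<in>set N. snd (snd x) = -1"
  shows "\<not> (\<exists>z. sq_step p (P @ N) z)"
  using assms
proof (induction P)
  case Nil
  then show ?case by (fastforce dest: sq_step_redex)
next
  case (Cons x P)
  show ?case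
  proof
    assume "\<exists>z. sq_step p ((x # P) @ N) z"
    then obtain u l a m b v where eq: "(x # P) @ N = u @ [(l, a, -1), (m, b, 1)] @ v"
      using sq_step_redex by blast
    show False
    proof (cases u)
      case Nil
      then show False using eq Cons.prems by simp
    next
      case (Cons y u')
      then show False using eq Cons.IH Cons.prems sq_step_applicable[of p u' l a m b v] by simp
    qed
  qed
qed

lemma sign_split_transfer:
  assumes "map (snd \<circ> snd) xs = map (snd \<circ> snd) (P @ N)"
    and "\<forall>x\<in>set P. snd (snd x) = 1" and "\<forall>x\<in>set N. snd (snd x) = -1"
  shows "\<exists>P' N'. xs = P' @ N' \<and> (\<forall>x\<in>set P'. snd (snd x) = 1) \<and> (\<forall>x\<in>set N'. snd (snd x) = -1)"
proof (intro exI conjI)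
  let ?k = "length P"
  have "set (map (snd \<circ> snd) (take ?k xs)) = set (map (snd \<circ> snd) P)"
    "set (map (snd \<circ> snd) (drop ?k xs)) = set (map (snd \<circ> snd) N)"
    using assms(1) by (simp_all add: take_map[symmetric] drop_map[symmetric])
  then show "\<forall>x\<in>set (take ?k xs). snd (snd x) = 1" "\<forall>x\<in>set (drop ?k xs). snd (snd x) = -1"
    using assms(2,3) by (auto simp: set_eq_iff)
qed simp

lemma sq_step_signs: "sq_step p xs ys \<Longrightarrow> set (map (snd \<circ> snd) xs) = set (map (snd \<circ> snd) ys)"
  by (induction rule: sq_step.induct) auto

lemma tl_step_signs: "tl_step p xs ys \<Longrightarrow> map (snd \<circ> snd) xs = map (snd \<circ> snd) ys"
  by (induction rule: tl_step.induct) simp_all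

lemma tl_irreducible_normal_seq_pos:
  assumes "\<not> (\<exists>z. sq_step p (U @ P @ V) z)" and "\<not> (\<exists>z. tl_step p (U @ P @ V) z)"
    and "\<forall>x\<in>set P. snd (snd x) = 1"
  shows "normal_seq p (map (fst \<circ> snd) P)"
proof (rule normal_seqI)
  fix u a b v assume "map (fst \<circ> snd) P = u @ [a, b] @ v"
  then obtain u' x y v' where P: "P = u' @ [x, y] @ v'" and "fst (snd x) = a" "fst (snd y) = b"
    by (auto simp: map_eq_append_conv)
  with assms(3) have "U @ P @ V = (U @ u') @ [(fst x, a, 1), (fst y, b, 1)] @ (v' @ V)"
    by (cases x, cases y) simp
  with assms(1,2) show "b < a + p"
    using tl_step.pos[of p "U @ u'" "fst x" a "fst y" b "v' @ V"]
    by (metis not_less Suc_eq_plus1 less_Suc_eq_le)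
qed

lemma tl_irreducible_normal_seq_neg:
  assumes "\<not> (\<exists>z. sq_step p (U @ N @ V) z)" and "\<not> (\<exists>z. tl_step p (U @ N @ V) z)"
    and "\<forall>x\<in>set N. snd (snd x) = -1"
  shows "normal_seq p (rev (map (fst \<circ> snd) N))"
proof (rule normal_seqI)
  fix u a b v assume "rev (map (fst \<circ> snd) N) = u @ [a, b] @ v"
  then have "map (fst \<circ> snd) N = rev v @ [b, a] @ rev u"
    by (simp add: rev_swap)
  then obtain u' y x v' where N: "N = u' @ [y, x] @ v'" and "fst (snd x) = a" "fst (snd y) = b"
    by (auto simp: map_eq_append_conv)
  with assms(3) have "U @ N @ V = (U @ u') @ [(fst y, b, -1), (fst x, a, -1)] @ (v' @ V)"
    by (cases x, cases y) simp
  with assms(1,2) show "b < a + p"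
    using tl_step.neg[of p "U @ u'" "fst y" b "fst x" a "v' @ V"]
    by (metis not_less Suc_eq_plus1 less_Suc_eq_le)
qed

lemma labelled_NF_shape:
  assumes signs: "set (map (snd \<circ> snd) xs) \<subseteq> {1, -1}" and "labelled_NF p xs ws"
  obtains Pos Neg where "ws = Pos @ Neg"
    and "\<forall>x\<in>set Pos. snd (snd x) = 1" and "\<forall>x\<in>set Neg. snd (snd x) = -1"
    and "normal_seq p (map (fst \<circ> snd) Pos)" and "normal_seq p (rev (map (fst \<circ> snd) Neg))"
proof -
  obtain ws1 where sq: "(sq_step p)\<^sup>*\<^sup>* xs ws1" and sq_irr: "\<not> (\<exists>z. sq_step p ws1 z)"
    and tl: "(tl_step p)\<^sup>*\<^sup>* ws1 ws" and tl_irr: "\<not> (\<exists>z. tl_step p ws z)"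
    using assms(2) unfolding labelled_NF_def by blast
  have "set (map (snd \<circ> snd) xs) = set (map (snd \<circ> snd) ws1)"
    by (rule rtranclp_invariant[where f = "\<lambda>xs. set (map (snd \<circ> snd) xs)", OF sq_step_signs sq])
  with signs have signs1: "\<forall>x\<in>set ws1. snd (snd x) \<in> {1, -1}" by auto
  obtain P1 N1 where "ws1 = P1 @ N1" "\<forall>x\<in>set P1. snd (snd x) = 1" "\<forall>x\<in>set N1. snd (snd x) = -1"
    using sq_irreducible_sign_split[OF signs1 sq_irr] by blast
  moreover have "map (snd \<circ> snd) ws1 = map (snd \<circ> snd) ws"
    by (rule rtranclp_invariant[where f = "map (snd \<circ> snd)", OF tl_step_signs tl])
  ultimately obtain Pos Neg where ws: "ws = Pos @ Neg"
    and Pos: "\<forall>x\<in>set Pos. snd (snd x) = 1" and Neg: "\<forall>x\<in>set Neg. snd (snd x) = -1"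
    using sign_split_transfer[of ws P1 N1] by auto
  moreover have "\<not> (\<exists>z. sq_step p ws z)"
    using sign_split_sq_irreducible[OF Pos Neg] ws by simp
  ultimately show ?thesis
    using that tl_irreducible_normal_seq_pos[of p "[]" Pos Neg]
      tl_irreducible_normal_seq_neg[of p Pos Neg "[]"] tl_irr by simp
qed

lemma labelled_NF_index_palindrome:
  assumes "p \<ge> 2" and "set (map (snd \<circ> snd) xs) \<subseteq> {1, -1}"
    and "eval_is_identity p (map snd xs)" and "labelled_NF p xs ws"
  shows "rev (map (fst \<circ> snd) ws) = map (fst \<circ> snd) ws"
proof -
  have p: "p \<ge> 1" using assms(1) by simp
  obtain Pos Neg where ws: "ws = Pos @ Neg"
    and Pos: "\<forall>x\<in>set Pos. snd (snd x) = 1" and Neg: "\<forall>x\<in>set Neg. snd (snd x) = -1"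
    and "normal_seq p (map (fst \<circ> snd) Pos)" and "normal_seq p (rev (map (fst \<circ> snd) Neg))"
    using labelled_NF_shape[OF assms(2,4)] .
  moreover define P where "P = map (fst \<circ> snd) Pos"
  moreover define N where "N = map (fst \<circ> snd) Neg"
  moreover have "word_action p (pos_word P) Pair = word_action p (pos_word (rev N)) Pair"
  proof -
    define G where "G = word_action p (pos_word (rev N)) Pair"
    have "map snd ws = pos_word P @ neg_word N"
      using ws Pos Neg unfolding P_def N_def by (auto intro!: map_cong)
    then have "word_action p (pos_word P) (word_action p (neg_word N) G) = word_action p (map snd ws) G"
      by simp
    also have "\<dots> = G"
      by (simp only: labelled_NF_word_action[OF assms(4) p, symmetric]
          eval_is_identity_word_action[OF assms(3) p])
    finally show ?thesis unfolding G_def by (simp only: neg_word_rev_pos_word[OF p])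
  qed
  ultimately have "P = rev N" using normal_seq_unique[OF assms(1)] by blast
  then show ?thesis using ws unfolding P_def N_def by simp
qed

section \<open>Letters of minimal index\<close>

text \<open>A move raises an index only above a strictly smaller partner index and lowers it only
  while it stays above its partner, so no letter ever leaves or reaches a lower bound i0.\<close>

definition floor_consistent :: "(nat \<Rightarrow> nat) \<Rightarrow> nat \<Rightarrow> lletter \<Rightarrow> bool" where
  "floor_consistent i i0 x \<longleftrightarrow> i0 \<le> fst (snd x) \<and> (fst (snd x) = i0 \<longleftrightarrow> i (fst x) = i0)"

lemma sq_step_floor_consistent:
  "sq_step p xs ys \<Longrightarrow> p \<ge> 1 \<Longrightarrow> \<forall>x\<in>set xs. floor_consistent i i0 x \<Longrightarrow>
    \<forall>y\<in>set ys. floor_consistent i i0 y"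
  by (induction rule: sq_step.induct) (auto simp: floor_consistent_def)

lemma tl_step_floor_consistent:
  "tl_step p xs ys \<Longrightarrow> p \<ge> 1 \<Longrightarrow> \<forall>x\<in>set xs. floor_consistent i i0 x \<Longrightarrow>
    \<forall>y\<in>set ys. floor_consistent i i0 y"
  by (induction rule: tl_step.induct) (auto simp: floor_consistent_def)

lemma labelled_NF_floor_consistent:
  assumes "labelled_NF p xs ws" "p \<ge> 1" "\<forall>x\<in>set xs. floor_consistent i i0 x"
  shows "\<forall>y\<in>set ws. floor_consistent i i0 y"
proof -
  obtain ws1 where sq: "(sq_step p)\<^sup>*\<^sup>* xs ws1" and tl: "(tl_step p)\<^sup>*\<^sup>* ws1 ws"
    using assms(1) unfolding labelled_NF_def by blast
  from sq assms(3) have "\<forall>x\<in>set ws1. floor_consistent i i0 x"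
    by (induction rule: rtranclp_induct) (use sq_step_floor_consistent assms(2) in blast)+
  with tl show ?thesis
    by (induction rule: rtranclp_induct) (use tl_step_floor_consistent assms(2) in blast)+
qed

lemma sq_step_labels: "sq_step p xs ys \<Longrightarrow> mset (map fst xs) = mset (map fst ys)"
  by (induction rule: sq_step.induct) auto

lemma tl_step_labels: "tl_step p xs ys \<Longrightarrow> mset (map fst xs) = mset (map fst ys)"
  by (induction rule: tl_step.induct) auto

lemma labelled_NF_labels:
  "labelled_NF p xs ws \<Longrightarrow> mset (map fst xs) = mset (map fst ws)"
  by (rule labelled_NF_invariant[where f = "\<lambda>xs. mset (map fst xs)", OF sq_step_labels tl_step_labels])

lemma tau_nth:
  assumes "distinct (map fst ws)" and "q < length ws"
  shows "tau ws (fst (ws ! q)) = Suc q"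
  unfolding tau_def
proof (rule arg_cong[where f = Suc], rule the_equality)
  fix k assume "k < length ws \<and> fst (ws ! k) = fst (ws ! q)"
  with assms show "k = q" using nth_eq_iff_index_eq[of "map fst ws" k q] by simp
qed (use assms(2) in simp)

lemma palindrome_nth: "rev xs = xs \<Longrightarrow> a + Suc b = length xs \<Longrightarrow> xs ! a = xs ! b"
  by (metis add_diff_cancel_right' add_Suc_right diff_Suc_Suc less_add_Suc2 rev_nth)

lemma pi_part_tau_block:
  assumes "distinct (map fst ws)" and "set (map fst ws) = {1..d}" and "length ws = d"
    and "B \<in> pi_part d (tau ws)"
  obtains qa qb where "B = {fst (ws ! qa), fst (ws ! qb)}" and "qa + Suc qb = d"
proof -
  obtain a b where B: "B = {a, b}" and "a \<in> set (map fst ws)" "b \<in> set (map fst ws)"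
    and tau: "tau ws a + tau ws b = d + 1"
    using assms(2,4) unfolding pi_part_def by blast
  then obtain qa qb where "qa < length ws" "a = fst (ws ! qa)" "qb < length ws" "b = fst (ws ! qb)"
    by (auto simp: in_set_conv_nth)
  with tau tau_nth[OF assms(1)] assms(3) B show ?thesis
    by (intro that[of qa qb]) simp_all
qed

lemma labelled_NF_labelled_word_of:
  assumes "labelled_NF p (labelled_word_of i eps d) ws"
  shows "distinct (map fst ws)" and "set (map fst ws) = {1..d}" and "length ws = d"
proof -
  have "mset (map fst ws) = mset [1..<Suc d]"
    using labelled_NF_labels[OF assms, symmetric] by (simp add: labelled_word_of_def comp_def)
  then show "distinct (map fst ws)" "set (map fst ws) = {1..d}" "length ws = d"
    by (metis distinct_upt mset_eq_imp_distinct_iff, metis atLeastLessThanSuc_atLeastAtMost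
        mset_eq_setD set_upt, metis length_map length_upt mset_eq_length diff_Suc_1)
qed

lemma labelled_word_of_NF_palindrome:
  assumes "p \<ge> 2" and "\<forall>l\<in>{1..d}. eps l \<in> {1, -1}"
    and "eval_is_identity p (word_of i eps d)" and "labelled_NF p (labelled_word_of i eps d) ws"
  shows "rev (map (fst \<circ> snd) ws) = map (fst \<circ> snd) ws"
proof (rule labelled_NF_index_palindrome[OF assms(1) _ _ assms(4)])
  show "set (map (snd \<circ> snd) (labelled_word_of i eps d)) \<subseteq> {1, -1}"
    using assms(2) by (auto simp: labelled_word_of_def)
  have "map snd (labelled_word_of i eps d) = word_of i eps d"
    by (simp add: labelled_word_of_def word_of_def)
  with assms(3) show "eval_is_identity p (map snd (labelled_word_of i eps d))" by simp
qed

lemma labelled_word_of_NF_min_index: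
  assumes "labelled_NF p (labelled_word_of i eps d) ws" and "p \<ge> 1" and "x \<in> set ws"
  shows "fst (snd x) = Min (i ` {1..d}) \<longleftrightarrow> i (fst x) = Min (i ` {1..d})"
proof -
  have "\<forall>x\<in>set (labelled_word_of i eps d). floor_consistent i (Min (i ` {1..d})) x"
    by (auto simp: labelled_word_of_def floor_consistent_def)
  with labelled_NF_floor_consistent[OF assms(1,2)] assms(3) show ?thesis
    unfolding floor_consistent_def by blast
qed

theorem mainTheorem4:
  fixes p d :: nat and i :: "nat \<Rightarrow> nat" and eps :: "nat \<Rightarrow> int" and ws :: "lletter list"
  assumes "p \<ge> 2"
    and "\<forall>l\<in>{1..d}. eps l \<in> {1, -1}"
    and "eval_is_identity p (word_of i eps d)"
    and "labelled_NF p (labelled_word_of i eps d) ws"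
  shows "\<forall>B\<in>pi_part d (tau ws). \<forall>l\<in>B. \<forall>m\<in>B.
           (i l = Min (i ` {1..d}) \<longleftrightarrow> i m = Min (i ` {1..d}))"
proof (intro ballI)
  fix B l m assume B: "B \<in> pi_part d (tau ws)" and "l \<in> B" "m \<in> B"
  let ?i0 = "Min (i ` {1..d})"
  have p: "p \<ge> 1" using assms(1) by simp
  note labels = labelled_NF_labelled_word_of[OF assms(4)]
  obtain qa qb where "B = {fst (ws ! qa), fst (ws ! qb)}" and q: "qa + Suc qb = d"
    using pi_part_tau_block[OF labels B] .
  moreover have "fst (snd (ws ! qa)) = fst (snd (ws ! qb))"
    using palindrome_nth[OF labelled_word_of_NF_palindrome[OF assms], of qa qb] q labels(3) by simp
  then have "i (fst (ws ! qa)) = ?i0 \<longleftrightarrow> i (fst (ws ! qb)) = ?i0"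
    using labelled_word_of_NF_min_index[OF assms(4) p, of "ws ! qa"]
      labelled_word_of_NF_min_index[OF assms(4) p, of "ws ! qb"] q labels(3) by simp
  ultimately show "i l = ?i0 \<longleftrightarrow> i m = ?i0"
    using \<open>l \<in> B\<close> \<open>m \<in> B\<close> by auto
qed

end
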